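(* For any $\varepsilon\in(0,1]$ and $D\in\mathbb{N}$ there exists a constant $c>0$ such that $|[M]_\varepsilon|\le c|M|$ for every $n\in\mathbb{N}$ and every $M\subseteq[n]^D$.
   Context: $\mathcal{L}$ is the set of all axis-parallel lines in $[n]^D$, i.e. sets $A_1\times\cdots\times A_D$ with $A_i=[n]$ for one $i$ and $|A_j|=1$ for all $j\ne i$. The $\varepsilon$-closure $[M]_\varepsilon$ of $M\subseteq[n]^D$ is the minimum set containing $M$ such that for every line $\ell\in\mathcal{L}$ either $\ell\subseteq[M]_\varepsilon$ or $|\ell\cap[M]_\varepsilon|<\varepsilon n$. *)

theory Defs
  imports Complex_Main
begin

definition grid :: "nat \<Rightarrow> nat \<Rightarrow> nat list set" where
  "grid n D = {xs. length xs = D \<and> set xs \<subseteq> {1..n}}"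

definition lines :: "nat \<Rightarrow> nat \<Rightarrow> nat list set set" where
  "lines n D = {{x[i := t] | t. t \<in> {1..n}} | x i. x \<in> grid n D \<and> i < D}"

definition eps_closed :: "real \<Rightarrow> nat \<Rightarrow> nat \<Rightarrow> nat list set \<Rightarrow> bool" where
  "eps_closed \<epsilon> n D S \<longleftrightarrow>
     (\<forall>L \<in> lines n D. L \<subseteq> S \<or> real (card (L \<inter> S)) < \<epsilon> * real n)"

definition eps_closure :: "real \<Rightarrow> nat \<Rightarrow> nat \<Rightarrow> nat list set \<Rightarrow> nat list set" where
  "eps_closure \<epsilon> n D M = \<Inter> {S. M \<subseteq> S \<and> eps_closed \<epsilon> n D S}"

end

theory Submission
  imports Defs "HOL-Library.FuncSet"
begin

text \<open>Call a grid point \<open>y\<close> heavy if for some set \<open>J\<close> of coordinates the flat through \<open>y\<close>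
  spanned by the directions in \<open>J\<close> contains at least \<open>a ^ |J|\<close> points of \<open>M\<close>; take
  \<open>a = \<epsilon> n / 2 ^ D\<close>. Every point of \<open>M\<close> is heavy (with \<open>J = {}\<close>), and the heavy points
  form an \<open>\<epsilon>\<close>-closed set: on a line in direction \<open>i\<close> that is not entirely heavy, every heavy
  point has a witness \<open>J\<close> with \<open>i \<notin> J\<close>, and each such \<open>J\<close> serves fewer than \<open>a\<close> points of
  the line, since otherwise the disjoint \<open>J\<close>-flats would put \<open>a ^ (|J| + 1)\<close> points of \<open>M\<close>
  into the \<open>(J \<union> {i})\<close>-flat of the line, making the whole line heavy. Hence the line
  has fewer than \<open>2 ^ (D - 1) a \<le> \<epsilon> n\<close> heavy points. Double counting pairs (point, point of
  \<open>M\<close> in its \<open>J\<close>-flat) shows that at most \<open>|M| (n / a) ^ |J|\<close> points have a heavy \<open>J\<close>-flat,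
  so there are at most \<open>2 ^ D (2 ^ D / \<epsilon>) ^ D |M|\<close> heavy points.\<close>

definition flat :: "nat set \<Rightarrow> nat list \<Rightarrow> nat list set" where
  "flat J y = {z. length z = length y \<and> (\<forall>j<length y. j \<notin> J \<longrightarrow> z ! j = y ! j)}"

definition heavy_points :: "real \<Rightarrow> nat \<Rightarrow> nat \<Rightarrow> nat list set \<Rightarrow> nat list set" where
  "heavy_points a n D M =
     {y \<in> grid n D. \<exists>J \<subseteq> {..<D}. a ^ card J \<le> real (card (M \<inter> flat J y))}"

definition axis_line :: "nat \<Rightarrow> nat list \<Rightarrow> nat \<Rightarrow> nat list set" where
  "axis_line n x i = {x[i := t] | t. t \<in> {1..n}}"

lemma mem_flat_commute: "z \<in> flat J y \<longleftrightarrow> y \<in> flat J z"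
  unfolding flat_def by auto

lemma flat_eq_if_mem: "z \<in> flat J y \<Longrightarrow> flat J z = flat J y"
  unfolding flat_def by auto

lemma flat_empty: "flat {} y = {y}"
  unfolding flat_def by (auto intro: nth_equalityI)

lemma list_update_in_flat: "i \<in> J \<Longrightarrow> x[i := t] \<in> flat J (x[i := s])"
  unfolding flat_def by auto (metis nth_list_update_neq)

lemma flat_list_update_disjoint:
  "\<lbrakk>i < length x; i \<notin> J; t \<noteq> s\<rbrakk> \<Longrightarrow> flat J (x[i := t]) \<inter> flat J (x[i := s]) = {}"
  unfolding flat_def by (auto simp: nth_list_update)

lemma flat_list_update_subset: "flat J (x[i := t]) \<subseteq> flat (insert i J) x"
  unfolding flat_def by (auto simp: nth_list_update)

lemma finite_grid: "finite (grid n D)"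
  using finite_lists_length_eq[of "{1..n}" D] unfolding grid_def by (simp add: conj_commute)

lemma axis_line_subset_grid: "x \<in> grid n D \<Longrightarrow> axis_line n x i \<subseteq> grid n D"
  unfolding axis_line_def grid_def using set_update_subset_insert by fastforce

lemma nth_in_grid_range: "\<lbrakk>x \<in> grid n D; i < D\<rbrakk> \<Longrightarrow> x ! i \<in> {1..n}"
  unfolding grid_def using nth_mem by blast

lemma mem_axis_line_self: "\<lbrakk>x \<in> grid n D; i < D\<rbrakk> \<Longrightarrow> x \<in> axis_line n x i"
  unfolding axis_line_def using nth_in_grid_range by force

lemma card_flat_inter_grid_le:
  assumes "J \<subseteq> {..<D}"
  shows "card (flat J y \<inter> grid n D) \<le> n ^ card J"
proof -
  have "finite J" using assms finite_subset by blast
  let ?restr = "\<lambda>z. restrict (nth z) J"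
  have "inj_on ?restr (flat J y \<inter> grid n D)"
  proof (rule inj_onI)
    fix z w assume z: "z \<in> flat J y \<inter> grid n D" and w: "w \<in> flat J y \<inter> grid n D"
      and "?restr z = ?restr w"
    then have "z ! j = w ! j" if "j < length z" for j
      using that by (cases "j \<in> J") (auto simp: flat_def dest: fun_cong[of _ _ j])
    then show "z = w" using z w by (auto simp: flat_def intro: nth_equalityI)
  qed
  moreover have "?restr ` (flat J y \<inter> grid n D) \<subseteq> (\<Pi>\<^sub>E j\<in>J. {1..n})"
    using assms nth_in_grid_range by fastforce
  ultimately have "card (flat J y \<inter> grid n D) \<le> card (\<Pi>\<^sub>E j\<in>J. {1..n::nat})"
    using card_inj_on_le \<open>finite J\<close> finite_PiE by (metis finite_atLeastAtMost)
  then show ?thesis by (simp add: card_PiE[OF \<open>finite J\<close>])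
qed

lemma sum_card_inter_flat_le:
  assumes "M \<subseteq> grid n D" "J \<subseteq> {..<D}"
  shows "(\<Sum>y\<in>grid n D. card (M \<inter> flat J y)) \<le> card M * n ^ card J"
proof -
  have "finite M" using assms(1) finite_grid finite_subset by blast
  have "(\<Sum>y\<in>grid n D. card (M \<inter> flat J y)) = (\<Sum>y\<in>grid n D. card {m \<in> M. m \<in> flat J y})"
    by (simp add: Int_def conj_commute)
  also have "\<dots> = (\<Sum>m\<in>M. card {y \<in> grid n D. m \<in> flat J y})"
    by (rule sum_multicount_gen[OF finite_grid \<open>finite M\<close>]) simp
  also have "\<dots> \<le> (\<Sum>m\<in>M. n ^ card J)"
  proof (rule sum_mono)
    fix m
    have "{y \<in> grid n D. m \<in> flat J y} = flat J m \<inter> grid n D"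
      using mem_flat_commute by blast
    then show "card {y \<in> grid n D. m \<in> flat J y} \<le> n ^ card J"
      using card_flat_inter_grid_le[OF assms(2)] by simp
  qed
  finally show ?thesis by simp
qed

lemma card_heavy_flats_le:
  assumes "M \<subseteq> grid n D" "J \<subseteq> {..<D}"
  shows "real (card {y \<in> grid n D. t \<le> real (card (M \<inter> flat J y))}) * t
         \<le> real (card M) * real n ^ card J"
proof -
  let ?H = "{y \<in> grid n D. t \<le> real (card (M \<inter> flat J y))}"
  have "real (card ?H) * t \<le> (\<Sum>y\<in>?H. real (card (M \<inter> flat J y)))"
    using sum_bounded_below[of ?H t] by (simp add: mult.commute)
  also have "\<dots> \<le> (\<Sum>y\<in>grid n D. real (card (M \<inter> flat J y)))"
    by (rule sum_mono2[OF finite_grid]) auto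
  also have "\<dots> \<le> real (card M) * real n ^ card J"
    using sum_card_inter_flat_le[OF assms(1,2)] by (metis of_nat_le_iff of_nat_mult of_nat_power of_nat_sum)
  finally show ?thesis .
qed

lemma line_subset_heavy_points:
  assumes "x \<in> grid n D" "y \<in> axis_line n x i" "J \<subseteq> {..<D}" "i \<in> J"
    and "a ^ card J \<le> real (card (M \<inter> flat J y))"
  shows "axis_line n x i \<subseteq> heavy_points a n D M"
proof
  fix q assume q_line: "q \<in> axis_line n x i"
  then obtain t where q: "q = x[i := t]" "t \<in> {1..n}" unfolding axis_line_def by blast
  obtain s where "y = x[i := s]" using assms(2) unfolding axis_line_def by blast
  then have "flat J q = flat J y"
    using q list_update_in_flat[OF assms(4)] flat_eq_if_mem by metis
  then show "q \<in> heavy_points a n D M"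
    using assms q_line axis_line_subset_grid[OF assms(1)] unfolding heavy_points_def by auto
qed

text \<open>The flats through distinct points of a line, taken in directions transversal to the
  line, are disjoint and lie in the flat of the line.\<close>

lemma card_mult_le_card_inter_flat_insert:
  assumes "finite M" "i < length x" "i \<notin> J" "P \<subseteq> axis_line n x i"
    and "\<And>p. p \<in> P \<Longrightarrow> b \<le> real (card (M \<inter> flat J p))"
  shows "real (card P) * b \<le> real (card (M \<inter> flat (insert i J) x))"
proof -
  have "finite P"
    using assms(4) by (rule finite_subset) (simp add: axis_line_def)
  have disjoint: "(M \<inter> flat J p) \<inter> (M \<inter> flat J q) = {}"
    if pq: "p \<in> P" "q \<in> P" "p \<noteq> q" for p q
  proof -
    obtain t s where "p = x[i := t]" "q = x[i := s]" using pq assms(4) unfolding axis_line_def by blast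
    moreover from calculation \<open>p \<noteq> q\<close> have "t \<noteq> s" by blast
    ultimately have "flat J p \<inter> flat J q = {}"
      using flat_list_update_disjoint[OF assms(2,3)] by simp
    then show ?thesis by blast
  qed
  have "real (card P) * b \<le> (\<Sum>p\<in>P. real (card (M \<inter> flat J p)))"
    using sum_bounded_below[of P b] assms(5) by (simp add: mult.commute)
  also have "\<dots> = real (card (\<Union>p\<in>P. M \<inter> flat J p))"
    using \<open>finite P\<close> assms(1) disjoint by (subst card_UN_disjoint) auto
  also have "\<dots> \<le> real (card (M \<inter> flat (insert i J) x))"
    using assms(1,4) flat_list_update_subset unfolding axis_line_def by (intro of_nat_mono card_mono) blast+
  finally show ?thesis .
qed

lemma card_axis_line_heavy_flats_lt:
  assumes "0 < a" "finite M" "x \<in> grid n D" "i < D" "J \<subseteq> {..<D}" "i \<notin> J"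
    and "\<not> axis_line n x i \<subseteq> heavy_points a n D M"
  shows "real (card {p \<in> axis_line n x i. a ^ card J \<le> real (card (M \<inter> flat J p))}) < a"
proof (rule ccontr)
  let ?P = "{p \<in> axis_line n x i. a ^ card J \<le> real (card (M \<inter> flat J p))}"
  assume "\<not> ?thesis"
  then have "a * a ^ card J \<le> real (card ?P) * a ^ card J"
    using assms(1) by (intro mult_right_mono) auto
  also have "\<dots> \<le> real (card (M \<inter> flat (insert i J) x))"
    using assms(3,4,6) by (intro card_mult_le_card_inter_flat_insert[OF assms(2)]) (auto simp: grid_def)
  finally have "a ^ card (insert i J) \<le> real (card (M \<inter> flat (insert i J) x))"
    using assms(5,6) finite_subset[OF assms(5)] by simp
  then have "axis_line n x i \<subseteq> heavy_points a n D M"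
    using assms(3-5) mem_axis_line_self by (intro line_subset_heavy_points) auto
  with assms(7) show False ..
qed

lemma eps_closed_heavy_points:
  assumes "0 < a" "M \<subseteq> grid n D" "2 ^ D * a \<le> \<epsilon> * real n"
  shows "eps_closed \<epsilon> n D (heavy_points a n D M)"
  unfolding eps_closed_def
proof
  fix L assume "L \<in> lines n D"
  then obtain x i where L: "L = axis_line n x i" and x: "x \<in> grid n D" and "i < D"
    unfolding lines_def axis_line_def by blast
  let ?S = "heavy_points a n D M" and ?Js = "Pow ({..<D} - {i})"
  let ?P = "\<lambda>J. {p \<in> L. a ^ card J \<le> real (card (M \<inter> flat J p))}"
  show "L \<subseteq> ?S \<or> real (card (L \<inter> ?S)) < \<epsilon> * real n"
  proof (cases "L \<subseteq> ?S")
    case not_heavy: False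
    have "L \<inter> ?S \<subseteq> (\<Union>J\<in>?Js. ?P J)"
    proof
      fix p assume p: "p \<in> L \<inter> ?S"
      then obtain J where J: "J \<subseteq> {..<D}" "a ^ card J \<le> real (card (M \<inter> flat J p))"
        unfolding heavy_points_def by auto
      with p not_heavy have "i \<notin> J"
        using line_subset_heavy_points[OF x, where y = p and J = J] L by blast
      with J p show "p \<in> (\<Union>J\<in>?Js. ?P J)" by auto
    qed
    moreover have "finite L"
      unfolding L by (rule finite_subset[OF axis_line_subset_grid[OF x] finite_grid])
    ultimately have "card (L \<inter> ?S) \<le> card (\<Union>J\<in>?Js. ?P J)"
      by (intro card_mono) auto
    also have "\<dots> \<le> (\<Sum>J\<in>?Js. card (?P J))"
      by (rule card_UN_le) simp
    finally have "real (card (L \<inter> ?S)) \<le> (\<Sum>J\<in>?Js. real (card (?P J)))"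
      by (simp add: of_nat_sum[symmetric] del: of_nat_sum)
    also have "\<dots> < real (card ?Js) * a"
      using card_axis_line_heavy_flats_lt[OF assms(1) _ x \<open>i < D\<close> _ _ not_heavy[unfolded L]]
        finite_subset[OF assms(2) finite_grid] L
      by (intro sum_bounded_above_strict) (auto simp: card_Pow)
    also have "\<dots> = 2 ^ (D - 1) * a"
      using \<open>i < D\<close> by (simp add: card_Pow)
    also have "\<dots> \<le> 2 ^ D * a"
      using assms(1) by (intro mult_right_mono) (auto simp: power_increasing)
    finally show ?thesis using assms(3) by simp
  qed simp
qed

lemma subset_heavy_points:
  assumes "M \<subseteq> grid n D"
  shows "M \<subseteq> heavy_points a n D M"
proof
  fix m assume "m \<in> M"
  then have "a ^ card {} \<le> real (card (M \<inter> flat {} m))"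
    by (simp add: flat_empty)
  with \<open>m \<in> M\<close> assms show "m \<in> heavy_points a n D M"
    unfolding heavy_points_def by blast
qed

lemma card_heavy_points_le:
  assumes "0 < a" "a \<le> real n" "M \<subseteq> grid n D"
  shows "real (card (heavy_points a n D M)) \<le> 2 ^ D * (real n / a) ^ D * real (card M)"
proof -
  let ?H = "\<lambda>J. {y \<in> grid n D. a ^ card J \<le> real (card (M \<inter> flat J y))}"
  have "heavy_points a n D M = (\<Union>J\<in>Pow {..<D}. ?H J)"
    unfolding heavy_points_def by auto
  then have "card (heavy_points a n D M) \<le> (\<Sum>J\<in>Pow {..<D}. card (?H J))"
    using card_UN_le[of "Pow {..<D}" ?H] by simp
  then have "real (card (heavy_points a n D M)) \<le> (\<Sum>J\<in>Pow {..<D}. real (card (?H J)))"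
    by (simp add: of_nat_sum[symmetric] del: of_nat_sum)
  also have "\<dots> \<le> (\<Sum>J\<in>Pow {..<D}. (real n / a) ^ D * real (card M))"
  proof (rule sum_mono)
    fix J assume "J \<in> Pow {..<D}"
    then have J: "J \<subseteq> {..<D}" by simp
    then have "card J \<le> D" using card_mono[OF finite_lessThan J] by simp
    have "real (card (?H J)) \<le> real (card M) * real n ^ card J / a ^ card J"
      using card_heavy_flats_le[OF assms(3) J, of "a ^ card J"] assms(1)
      by (simp add: pos_le_divide_eq)
    also have "\<dots> = real (card M) * (real n / a) ^ card J"
      by (simp add: power_divide)
    also have "\<dots> \<le> real (card M) * (real n / a) ^ D"
      using assms(1,2) \<open>card J \<le> D\<close> by (intro mult_left_mono power_increasing) auto
    finally show "real (card (?H J)) \<le> (real n / a) ^ D * real (card M)"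
      by (simp only: mult.commute)
  qed
  also have "\<dots> = 2 ^ D * (real n / a) ^ D * real (card M)"
    by (simp add: card_Pow)
  finally show ?thesis .
qed

lemma eps_closure_subset: "\<lbrakk>M \<subseteq> S; eps_closed \<epsilon> n D S\<rbrakk> \<Longrightarrow> eps_closure \<epsilon> n D M \<subseteq> S"
  unfolding eps_closure_def by blast

lemma eps_closure_eq_self: "eps_closed \<epsilon> n D M \<Longrightarrow> eps_closure \<epsilon> n D M = M"
  unfolding eps_closure_def by blast

lemma eps_closed_zero: "eps_closed \<epsilon> 0 D S"
  unfolding eps_closed_def lines_def by auto

lemma card_eps_closure_le:
  assumes "0 < \<epsilon>" "\<epsilon> \<le> 2 ^ D" "0 < n" "M \<subseteq> grid n D"
  shows "real (card (eps_closure \<epsilon> n D M)) \<le> 2 ^ D * (2 ^ D / \<epsilon>) ^ D * real (card M)"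
proof -
  define a where "a = \<epsilon> * real n / 2 ^ D"
  have a: "0 < a" "2 ^ D * a \<le> \<epsilon> * real n" "real n / a = 2 ^ D / \<epsilon>"
    using assms(1,3) by (auto simp: a_def)
  have "a \<le> real n"
    using mult_right_mono[OF assms(2) of_nat_0_le_iff] unfolding a_def by (simp add: pos_divide_le_eq mult.commute)
  have "eps_closure \<epsilon> n D M \<subseteq> heavy_points a n D M"
    using assms(4) a by (intro eps_closure_subset subset_heavy_points eps_closed_heavy_points)
  then have "card (eps_closure \<epsilon> n D M) \<le> card (heavy_points a n D M)"
    by (rule card_mono[rotated]) (simp add: heavy_points_def finite_grid)
  then show ?thesis
    using card_heavy_points_le[OF a(1) \<open>a \<le> real n\<close> assms(4)] a(3) by simp
qed

theorem lemma8:
  fixes \<epsilon> :: real and D :: nat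
  assumes "0 < \<epsilon>" and "\<epsilon> \<le> 1"
  shows "\<exists>c > 0. \<forall>(n::nat) M. M \<subseteq> grid n D \<longrightarrow>
           real (card (eps_closure \<epsilon> n D M)) \<le> c * real (card M)"
proof -
  define c where "c = 2 ^ D * (2 ^ D / \<epsilon>) ^ D"
  have "\<epsilon> \<le> 2 ^ D"
    using assms(2) by (meson one_le_numeral one_le_power order_trans)
  then have "1 \<le> 2 ^ D / \<epsilon>"
    using assms(1) by (simp add: le_divide_eq)
  then have "1 \<le> c"
    unfolding c_def by (intro mult_ge1_I one_le_power) simp_all
  moreover have "real (card (eps_closure \<epsilon> n D M)) \<le> c * real (card M)"
    if "M \<subseteq> grid n D" for n M
  proof (cases "n = 0")
    case True
    then show ?thesis
      using \<open>1 \<le> c\<close> by (simp add: eps_closed_zero eps_closure_eq_self mult_le_cancel_right1)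
  next
    case False
    then show ?thesis
      unfolding c_def using card_eps_closure_le assms(1) \<open>\<epsilon> \<le> 2 ^ D\<close> that by simp
  qed
  ultimately show ?thesis by (intro exI[of _ c]) auto
qed

end
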